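(* Suppose $D$, $\gamma$, $\Phi$ are as below (standing assumptions). (i) For any $q\in[0,\gamma)$ there exists $C=C(q)>0$ such that $$\int_{B(x,r)\cap D}\frac{dy}{(\delta_D(y)\wedge A)^q}\le\frac{Cr^d}{((\delta_D(x)\vee r)\wedge A)^q}\quad\text{for all }A\in(0,\infty],\ x\in\overline D,\ r>0.$$ (ii) There exists $C>0$ such that $$\int_{B(x,r)\cap D}\Phi\Big(\frac{a}{\delta_D(y)\wedge A}\Big)dy\le Cr^d\Phi\Big(\frac{a}{(\delta_D(x)\vee r)\wedge A}\Big)\quad\text{for all }A\in(0,\infty],\ x\in\overline D,\ a,r>0.$$
   Context: Standing assumptions: $d\ge1$, $\alpha\in(0,2)$; $D\subset\mathbb{R}^d$ is a $\kappa$-fat open set (for some $\kappa\in(0,1)$, with localization constant $R_0\in(0,\mathrm{diam}(D)]$: for every $x\in\overline D$, $r\in(0,R_0)$ there is $z\in D$ with $B(z,\kappa r)\subset D\cap B(x,r)$) whose boundary has Assouad dimension $\dim_{\rm A}(\partial D)<d$, where $\dim_{\rm A}(E)$ is the infimum of $\lambda>0$ such that for some $C$, for all $x\in E$, $0<s\le r<\mathrm{diam}(E)$, $B(x,r)\cap E$ is covered by at most $C(r/s)^\lambda$ balls of radius $s$ centered in $E$. $\gamma:=d-\dim_{\rm A}(\partial D)$, $\delta_D(x)=\mathrm{dist}(x,\partial D)$, $r\wedge\infty=r$. $\Phi:[0,\infty)\to[1,\infty)$ is continuous, increasing, $\Phi(0)=1$, and satisfies $\Phi(r)/\Phi(s)\le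 C(r/s)^\beta$ ($0<s\le r$) for some $\beta\ge0$, $C>1$; the infimum $\overline\beta$ of such $\beta$ satisfies $\overline\beta<\gamma\wedge\alpha$. *)

theory Defs
  imports "HOL-Analysis.Analysis"
begin

definition ediam :: "'a::metric_space set \<Rightarrow> ereal" where
  "ediam E = (if bounded E then ereal (diameter E) else \<infinity>)"

definition bdist :: "'a::euclidean_space set \<Rightarrow> 'a \<Rightarrow> real" where
  "bdist D x = infdist x (frontier D)"

definition assouad_exps :: "'a::metric_space set \<Rightarrow> real set" where
  "assouad_exps E = {l. l > 0 \<and> (\<exists>C. \<forall>x\<in>E. \<forall>s r. 0 < s \<and> s \<le> r \<and> ereal r < ediam E \<longrightarrow>
       (\<exists>F. finite F \<and> F \<subseteq> E \<and> real (card F) \<le> C * (r / s) powr l \<and>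
            ball x r \<inter> E \<subseteq> (\<Union>c\<in>F. ball c s)))}"

text \<open>Assouad dimension (infimum; \<open>\<infinity>\<close> if no admissible exponent).\<close>
definition assouad_dim :: "'a::metric_space set \<Rightarrow> ereal" where
  "assouad_dim E = Inf (ereal ` assouad_exps E)"

definition kappa_fat :: "real \<Rightarrow> real \<Rightarrow> 'a::euclidean_space set \<Rightarrow> bool" where
  "kappa_fat \<kappa> R0 D \<longleftrightarrow> open D \<and> 0 < \<kappa> \<and> \<kappa> < 1 \<and> 0 < R0 \<and> ereal R0 \<le> ediam D \<and>
     (\<forall>x\<in>closure D. \<forall>r. 0 < r \<and> r < R0 \<longrightarrow> (\<exists>z\<in>D. ball z (\<kappa> * r) \<subseteq> D \<inter> ball x r))"

text \<open>Truncation \<open>t \<and> A\<close> with \<open>A \<in> (0,\<infinity>]\<close>, where \<open>t \<and> \<infinity> = t\<close>.\<close>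
definition trunc :: "real \<Rightarrow> ereal \<Rightarrow> real" where
  "trunc t A = real_of_ereal (min (ereal t) A)"

definition scaling_exps :: "(real \<Rightarrow> real) \<Rightarrow> real set" where
  "scaling_exps \<Phi> = {\<beta>. \<beta> \<ge> 0 \<and> (\<exists>C>1. \<forall>s r. 0 < s \<and> s \<le> r \<longrightarrow> \<Phi> r / \<Phi> s \<le> C * (r / s) powr \<beta>)}"

end

theory Submission
  imports Defs
begin

(*
  Put t = (\<delta>(x) \<or> r) \<and> A. For y \<in> B(x,r), the weight max(1, t / (\<delta>(y) \<and> A)) is at most 2 when
  2r \<le> \<delta>(x) (then \<delta>(y) \<ge> \<delta>(x)/2), and at most 2 max(1, R/\<delta>(y)) with R = r \<and> A \<le> r otherwise.
  The integrand of (i) is at most t^(-q) times the q-th power of this weight, and by weak scaling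
  that of (ii) is at most C \<Phi>(a/t) times its \<beta>-th power, for some \<beta> < \<gamma>. It therefore suffices to bound
  the integral of max(1, R/\<delta>)^q over B(x,r) by C r^d for q < \<gamma>. Choose an Assouad exponent \<lambda> with
  \<lambda> + q < d: covering the boundary at every scale by C(\<rho>/s)^\<lambda> balls of radius s gives
  |{y \<in> B(x,\<rho>) : \<delta>(y) < s}| \<le> C \<rho>^\<lambda> s^(d-\<lambda>), and summing over the dyadic layers
  R 2^(-k-1) \<le> \<delta> < R 2^(-k) yields a geometric series with ratio 2^(q+\<lambda>-d) < 1.
*)

lemma assouad_exps_less:
  assumes "assouad_dim E \<noteq> \<infinity>" "real_of_ereal (assouad_dim E) < t"
  obtains l where "l \<in> assouad_exps E" "l < t"
proof -
  have "0 \<le> assouad_dim E" unfolding assouad_dim_def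
    by (rule Inf_greatest) (auto simp: assouad_exps_def)
  with assms have "Inf (ereal ` assouad_exps E) < ereal t"
    unfolding assouad_dim_def by (cases "Inf (ereal ` assouad_exps E)") auto
  then show ?thesis using that by (auto simp: Inf_less_iff)
qed

lemma assouad_expsE:
  assumes "l \<in> assouad_exps E"
  obtains C where "0 < l" "\<forall>z\<in>E. \<forall>s r. 0 < s \<and> s \<le> r \<and> ereal r < ediam E \<longrightarrow>
    (\<exists>F. finite F \<and> F \<subseteq> E \<and> real (card F) \<le> C * (r / s) powr l \<and> ball z r \<inter> E \<subseteq> (\<Union>c\<in>F. ball c s))"
proof -
  from assms have l: "0 < l" and "\<exists>C. \<forall>z\<in>E. \<forall>s r. 0 < s \<and> s \<le> r \<and> ereal r < ediam E \<longrightarrow>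
    (\<exists>F. finite F \<and> F \<subseteq> E \<and> real (card F) \<le> C * (r / s) powr l \<and> ball z r \<inter> E \<subseteq> (\<Union>c\<in>F. ball c s))"
    unfolding assouad_exps_def by simp_all
  then obtain C where "\<forall>z\<in>E. \<forall>s r. 0 < s \<and> s \<le> r \<and> ereal r < ediam E \<longrightarrow>
    (\<exists>F. finite F \<and> F \<subseteq> E \<and> real (card F) \<le> C * (r / s) powr l \<and> ball z r \<inter> E \<subseteq> (\<Union>c\<in>F. ball c s))"
    by (elim exE)
  with l show ?thesis by (rule that)
qed

definition covering_bound :: "'a::metric_space set \<Rightarrow> real \<Rightarrow> real \<Rightarrow> bool" where
  "covering_bound E l M \<longleftrightarrow> (\<forall>z\<in>E. \<forall>\<rho> s. 0 < s \<and> s \<le> \<rho> \<longrightarrow>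
     (\<exists>F. finite F \<and> real (card F) \<le> M * (\<rho> / s) powr l \<and> ball z \<rho> \<inter> E \<subseteq> (\<Union>c\<in>F. ball c s)))"

lemma finite_ball_cover_refine:
  fixes E :: "'a::metric_space set"
  assumes "finite F0" "E \<subseteq> (\<Union>e\<in>F0. ball e \<rho>)"
    and local: "\<And>e. e \<in> F0 \<Longrightarrow> \<exists>G. finite G \<and> real (card G) \<le> n \<and> ball e \<rho> \<inter> E \<subseteq> (\<Union>c\<in>G. ball c s)"
  shows "\<exists>F. finite F \<and> real (card F) \<le> real (card F0) * n \<and> E \<subseteq> (\<Union>c\<in>F. ball c s)"
proof -
  from local obtain G where G: "\<And>e. e \<in> F0 \<Longrightarrow> finite (G e)" "\<And>e. e \<in> F0 \<Longrightarrow> real (card (G e)) \<le> n"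
      "\<And>e. e \<in> F0 \<Longrightarrow> ball e \<rho> \<inter> E \<subseteq> (\<Union>c\<in>G e. ball c s)"
    by metis
  have "real (card (\<Union>e\<in>F0. G e)) \<le> (\<Sum>e\<in>F0. real (card (G e)))"
    by (metis card_UN_le[OF assms(1)] of_nat_le_iff of_nat_sum)
  also have "\<dots> \<le> real (card F0) * n"
    using sum_mono[of F0 "\<lambda>e. real (card (G e))" "\<lambda>_. n", OF G(2)] by simp
  finally have "real (card (\<Union>e\<in>F0. G e)) \<le> real (card F0) * n" .
  moreover have "E \<subseteq> (\<Union>c\<in>(\<Union>e\<in>F0. G e). ball c s)"
  proof
    fix w assume "w \<in> E"
    with assms(2) obtain e where "e \<in> F0" "w \<in> ball e \<rho>" by blast
    with G(3) \<open>w \<in> E\<close> show "w \<in> (\<Union>c\<in>(\<Union>e\<in>F0. G e). ball c s)" by blast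
  qed
  moreover have "finite (\<Union>e\<in>F0. G e)" using assms(1) G(1) by blast
  ultimately show ?thesis by blast
qed

lemma assouad_exps_cover_bounded:
  fixes E :: "'a::euclidean_space set"
  assumes "l \<in> assouad_exps E" "closed E"
  obtains N where "0 \<le> N" "\<forall>s. bounded E \<and> 0 < s \<and> s \<le> diameter E \<longrightarrow>
    (\<exists>F. finite F \<and> real (card F) \<le> N * (diameter E / s) powr l \<and> E \<subseteq> (\<Union>c\<in>F. ball c s))"
proof (cases "bounded E \<and> 0 < diameter E")
  case True
  let ?d = "diameter E"
  obtain C0 where "0 < l" and C0: "\<forall>z\<in>E. \<forall>s r. 0 < s \<and> s \<le> r \<and> ereal r < ediam E \<longrightarrow>
    (\<exists>F. finite F \<and> F \<subseteq> E \<and> real (card F) \<le> C0 * (r / s) powr l \<and> ball z r \<inter> E \<subseteq> (\<Union>c\<in>F. ball c s))"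
    by (rule assouad_expsE[OF assms(1)])
  have "compact E" using True assms(2) by (simp add: compact_eq_bounded_closed)
  then obtain F0 where F0: "finite F0" "F0 \<subseteq> E" "E \<subseteq> (\<Union>e\<in>F0. ball e (?d / 2))"
    using True compact_imp_seq_compact[THEN seq_compact_imp_totally_bounded, rule_format, of E "?d / 2"]
    by auto
  have "\<forall>s. bounded E \<and> 0 < s \<and> s \<le> ?d \<longrightarrow>
    (\<exists>F. finite F \<and> real (card F) \<le> real (card F0) * (\<bar>C0\<bar> * (?d / s) powr l) \<and> E \<subseteq> (\<Union>c\<in>F. ball c s))"
  proof (intro allI impI finite_ball_cover_refine[OF F0(1,3)])
    fix s e assume "bounded E \<and> 0 < s \<and> s \<le> ?d" and e: "e \<in> F0"
    then have s: "0 < s" "s \<le> ?d" by simp_all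
    have "0 < s / 2 \<and> s / 2 \<le> ?d / 2 \<and> ereal (?d / 2) < ediam E" using True s by (simp add: ediam_def)
    from C0[rule_format, OF subsetD[OF F0(2) e] this] obtain G
      where G: "finite G" "real (card G) \<le> C0 * ((?d / 2) / (s / 2)) powr l"
        "ball e (?d / 2) \<inter> E \<subseteq> (\<Union>c\<in>G. ball c (s / 2))"
      by blast
    have "real (card G) \<le> \<bar>C0\<bar> * (?d / s) powr l"
      using G(2) mult_right_mono[OF abs_ge_self[of C0], of "(?d / s) powr l"] by simp
    moreover have "(\<Union>c\<in>G. ball c (s / 2)) \<subseteq> (\<Union>c\<in>G. ball c s)" using s by auto
    with G(3) have "ball e (?d / 2) \<inter> E \<subseteq> (\<Union>c\<in>G. ball c s)" by (rule subset_trans)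
    ultimately show "\<exists>G. finite G \<and> real (card G) \<le> \<bar>C0\<bar> * (?d / s) powr l \<and> ball e (?d / 2) \<inter> E \<subseteq> (\<Union>c\<in>G. ball c s)"
      using G(1) by (intro exI[of _ G] conjI)
  qed
  then show ?thesis using that[of "real (card F0) * \<bar>C0\<bar>"] by (simp add: mult.assoc)
next
  case False
  have "\<forall>s. bounded E \<and> 0 < s \<and> s \<le> diameter E \<longrightarrow>
    (\<exists>F. finite F \<and> real (card F) \<le> 0 * (diameter E / s) powr l \<and> E \<subseteq> (\<Union>c\<in>F. ball c s))"
    using False by auto
  then show ?thesis by (intro that[of 0]) simp_all
qed

lemma assouad_exps_covering:
  fixes E :: "'a::euclidean_space set"
  assumes "l \<in> assouad_exps E" "closed E"
  obtains M where "0 < M" "covering_bound E l M"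
proof -
  obtain C0 where l: "0 < l" and C0: "\<forall>z\<in>E. \<forall>s r. 0 < s \<and> s \<le> r \<and> ereal r < ediam E \<longrightarrow>
    (\<exists>F. finite F \<and> F \<subseteq> E \<and> real (card F) \<le> C0 * (r / s) powr l \<and> ball z r \<inter> E \<subseteq> (\<Union>c\<in>F. ball c s))"
    by (rule assouad_expsE[OF assms(1)])
  note C0 = C0[rule_format]
  obtain N where "0 \<le> N" and N: "\<forall>s. bounded E \<and> 0 < s \<and> s \<le> diameter E \<longrightarrow>
    (\<exists>F. finite F \<and> real (card F) \<le> N * (diameter E / s) powr l \<and> E \<subseteq> (\<Union>c\<in>F. ball c s))"
    by (rule assouad_exps_cover_bounded[OF assms])
  note N = N[rule_format]
  define M where "M = 1 + \<bar>C0\<bar> + N"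
  have M: "1 \<le> M" "C0 \<le> M" "N \<le> M" using \<open>0 \<le> N\<close> abs_ge_self[of C0] unfolding M_def by linarith+
  have "covering_bound E l M" unfolding covering_bound_def
  proof (intro ballI allI impI)
    fix z and \<rho> s :: real assume z: "z \<in> E" and s: "0 < s \<and> s \<le> \<rho>"
    have ge1: "1 \<le> (\<rho> / s) powr l" using s l by (simp add: ge_one_powr_ge_zero)
    consider (small) "ereal \<rho> < ediam E" | (large) "bounded E" "diameter E \<le> \<rho>"
      by (cases "bounded E"; cases "\<rho> < diameter E") (auto simp: ediam_def)
    then show "\<exists>F. finite F \<and> real (card F) \<le> M * (\<rho> / s) powr l \<and> ball z \<rho> \<inter> E \<subseteq> (\<Union>c\<in>F. ball c s)"
    proof cases
      case small
      with s have "0 < s \<and> s \<le> \<rho> \<and> ereal \<rho> < ediam E" by simp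
      from C0[OF z this] obtain F
        where "finite F" "real (card F) \<le> C0 * (\<rho> / s) powr l" "ball z \<rho> \<inter> E \<subseteq> (\<Union>c\<in>F. ball c s)"
        by blast
      moreover have "C0 * (\<rho> / s) powr l \<le> M * (\<rho> / s) powr l" using M ge1 by (intro mult_right_mono) auto
      ultimately show ?thesis by (intro exI[of _ F]) simp
    next
      case large
      show ?thesis
      proof (cases "diameter E < s")
        case True
        then have "ball z \<rho> \<inter> E \<subseteq> ball z s" using diameter_bounded_bound[OF large(1) z] by fastforce
        moreover have "1 \<le> M * (\<rho> / s) powr l" using M(1) ge1 by (metis mult_mono' mult_1_left zero_le_one)
        ultimately show ?thesis by (intro exI[of _ "{z}"]) auto
      next
        case False
        with large(1) s have "bounded E \<and> 0 < s \<and> s \<le> diameter E" by simp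
        from N[OF this] obtain F
          where "finite F" "real (card F) \<le> N * (diameter E / s) powr l" "E \<subseteq> (\<Union>c\<in>F. ball c s)"
          by blast
        moreover have "N * (diameter E / s) powr l \<le> M * (\<rho> / s) powr l"
          using M(3) \<open>0 \<le> N\<close> large(2) False s l
          by (intro mult_mono powr_mono2 divide_right_mono) auto
        ultimately show ?thesis by (intro exI[of _ F]) auto
      qed
    qed
  qed
  with M(1) show ?thesis by (intro that[of M]) simp_all
qed

lemma infdist_lessE:
  assumes "infdist x E < s" "E \<noteq> {}"
  obtains w where "w \<in> E" "dist x w < s"
  using assms by (auto simp: infdist_notempty cINF_less_iff intro: bdd_belowI[of _ 0])

lemma tube_subset_covering_balls:
  fixes E :: "'a::euclidean_space set"
  assumes "E \<noteq> {}" "covering_bound E l M" "0 < s" "s \<le> \<rho>" "y0 \<in> ball x \<rho>" "infdist y0 E < s"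
  obtains F where "finite F" "real (card F) \<le> M * (4 * \<rho> / s) powr l"
    "{y \<in> ball x \<rho>. infdist y E < s} \<subseteq> (\<Union>c\<in>F. ball c (2 * s))"
proof -
  obtain z where z: "z \<in> E" "dist y0 z < s" using infdist_lessE[OF assms(6,1)] .
  have "0 < s \<and> s \<le> 4 * \<rho>" using assms(3,4) by simp
  from assms(2)[unfolded covering_bound_def, rule_format, OF z(1) this] obtain F
    where F: "finite F" "real (card F) \<le> M * (4 * \<rho> / s) powr l" "ball z (4 * \<rho>) \<inter> E \<subseteq> (\<Union>c\<in>F. ball c s)"
    by blast
  have "{y \<in> ball x \<rho>. infdist y E < s} \<subseteq> (\<Union>c\<in>F. ball c (2 * s))"
  proof
    fix y assume y: "y \<in> {y \<in> ball x \<rho>. infdist y E < s}"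
    then obtain w where w: "w \<in> E" "dist y w < s" using infdist_lessE[OF _ assms(1)] by blast
    have "dist z w < 4 * \<rho>"
      using dist_triangle[of z w y] dist_triangle[of z y x] dist_triangle[of z x y0] y assms(4,5) z w
      by (simp add: dist_commute)
    then obtain c where "c \<in> F" "dist c w < s" using F(3) w by auto
    moreover have "dist c y \<le> dist c w + dist y w" by (rule dist_triangle2)
    ultimately show "y \<in> (\<Union>c\<in>F. ball c (2 * s))" using w by force
  qed
  with F(1,2) show ?thesis by (rule that)
qed

lemma covering_tube_measure:
  fixes E :: "'a::euclidean_space set" and M l :: real
  assumes "E \<noteq> {}" "0 \<le> M" "covering_bound E l M"
  obtains K where "0 \<le> K"
    "\<And>x \<rho> s. 0 < s \<Longrightarrow> s \<le> \<rho> \<Longrightarrow>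
       emeasure lborel {y \<in> ball x \<rho>. infdist y E < s} \<le> ennreal (K * \<rho> powr l * s powr (real DIM('a) - l))"
proof
  define \<omega> where "\<omega> = unit_ball_vol DIM('a)"
  have \<omega>: "0 < \<omega>" unfolding \<omega>_def by simp
  show "0 \<le> M * 4 powr l * 2 ^ DIM('a) * \<omega>" using assms(2) \<omega> by simp
  fix x :: 'a and \<rho> s :: real assume s: "0 < s" "s \<le> \<rho>"
  let ?S = "{y \<in> ball x \<rho>. infdist y E < s}"
  show "emeasure lborel ?S \<le> ennreal (M * 4 powr l * 2 ^ DIM('a) * \<omega> * \<rho> powr l * s powr (real DIM('a) - l))"
  proof (cases "?S = {}")
    case False
    then obtain y0 where "y0 \<in> ball x \<rho>" "infdist y0 E < s" by blast
    with assms(1,3) s obtain F where F: "finite F" "real (card F) \<le> M * (4 * \<rho> / s) powr l"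
        "?S \<subseteq> (\<Union>c\<in>F. ball c (2 * s))"
      by (rule tube_subset_covering_balls)
    then have "emeasure lborel ?S \<le> emeasure lborel (\<Union>c\<in>F. ball c (2 * s))"
      by (intro emeasure_mono) (auto intro!: borel_open)
    also have "\<dots> \<le> (\<Sum>c\<in>F. emeasure lborel (ball c (2 * s)))"
      using F(1) by (intro emeasure_subadditive_finite) auto
    also have "\<dots> = ennreal (real (card F) * (\<omega> * (2 * s) ^ DIM('a)))"
      using s \<omega> by (simp add: \<omega>_def emeasure_ball ennreal_of_nat_eq_real_of_nat ennreal_mult')
    also have "\<dots> \<le> ennreal (M * (4 * \<rho> / s) powr l * (\<omega> * (2 * s) ^ DIM('a)))"
      using F(2) \<omega> s by (intro ennreal_leI mult_right_mono) auto
    also have "M * (4 * \<rho> / s) powr l * (\<omega> * (2 * s) ^ DIM('a))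
        = M * 4 powr l * 2 ^ DIM('a) * \<omega> * \<rho> powr l * s powr (real DIM('a) - l)"
      using s by (simp add: powr_divide powr_mult powr_diff powr_realpow power_mult_distrib field_simps)
    finally show ?thesis .
  next
    case True
    show ?thesis unfolding True by simp
  qed
qed

lemma assouad_tube_measure:
  fixes E :: "'a::euclidean_space set"
  assumes "l \<in> assouad_exps E" "closed E" "E \<noteq> {}"
  obtains K where "0 \<le> K"
    "\<And>x \<rho> s. 0 < s \<Longrightarrow> s \<le> \<rho> \<Longrightarrow>
       emeasure lborel {y \<in> ball x \<rho>. infdist y E < s} \<le> ennreal (K * \<rho> powr l * s powr (real DIM('a) - l))"
proof -
  obtain M where M: "0 < M" "covering_bound E l M" by (rule assouad_exps_covering[OF assms(1,2)])
  show ?thesis by (rule covering_tube_measure[OF assms(3) less_imp_le[OF M(1)] M(2) that])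
qed

lemma borel_measurable_infdist [measurable]: "(\<lambda>y. infdist y E) \<in> borel_measurable borel"
  by (intro borel_measurable_continuous_onI continuous_on_infdist continuous_on_id)

lemma ex_dyadic_level:
  fixes x :: real
  assumes "1 < x"
  obtains k :: nat where "2 ^ k < x" "x \<le> 2 ^ Suc k"
proof -
  define k where "k = nat (\<lceil>log 2 x\<rceil> - 1)"
  have "0 < log 2 x" using assms by simp
  then have "\<lceil>log 2 x\<rceil> = int k + 1" unfolding k_def by linarith
  then have "2 powr real k < x \<and> x \<le> 2 powr real (k + 1)"
    using assms ceiling_log_eq_powr_iff[of x 2 k] by simp
  moreover have "2 powr real (k + 1) = 2 ^ Suc k" by (simp add: powr_realpow del: of_nat_Suc)
  ultimately have "2 ^ k < x" "x \<le> 2 ^ Suc k" by (simp_all add: powr_realpow)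
  then show ?thesis by (rule that)
qed

lemma max_ratio_powr_le_dyadic_sum:
  fixes R \<delta> q :: real
  assumes "0 < R" "0 \<le> \<delta>" "0 \<le> q"
  shows "ennreal (max 1 (R / \<delta>) powr q)
           \<le> 1 + (\<Sum>k. ennreal ((2 ^ Suc k) powr q) * indicator {..< R / 2 ^ k} \<delta>)"
proof (cases "R / \<delta> \<le> 1")
  case True
  then show ?thesis by simp
next
  case False
  then have "1 < R / \<delta>" by simp
  then obtain k where k: "2 ^ k < R / \<delta>" "R / \<delta> \<le> 2 ^ Suc k" by (rule ex_dyadic_level)
  have \<delta>: "0 < \<delta>" using False assms(2) by (cases "\<delta> = 0") auto
  then have "\<delta> < R / 2 ^ k" using k(1) by (simp add: field_simps)
  have "ennreal (max 1 (R / \<delta>) powr q) \<le> ennreal ((2 ^ Suc k) powr q)"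
    using False k(2) assms by (intro ennreal_leI powr_mono2) auto
  also have "\<dots> = ennreal ((2 ^ Suc k) powr q) * indicator {..< R / 2 ^ k} \<delta>"
    using \<open>\<delta> < R / 2 ^ k\<close> by simp
  also have "\<dots> \<le> (\<Sum>k. ennreal ((2 ^ Suc k) powr q) * indicator {..< R / 2 ^ k} \<delta>)"
    using sum_le_suminf[OF summableI, of "{k}" "\<lambda>j. ennreal ((2 ^ Suc j) powr q) * indicator {..< R / 2 ^ j} \<delta>"]
    by (simp only: sum.insert sum.empty finite.emptyI finite_insert empty_iff add_0_right zero_le simp_thms)
  also have "\<dots> \<le> 1 + (\<Sum>k. ennreal ((2 ^ Suc k) powr q) * indicator {..< R / 2 ^ k} \<delta>)"
    by (rule add_increasing) simp_all
  finally show ?thesis .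
qed

lemma indicator_max_ratio_le_layers:
  fixes R q :: real
  assumes "0 < R" "0 \<le> q"
  shows "indicator B y * ennreal (max 1 (R / infdist y E) powr q)
    \<le> indicator B y + (\<Sum>k. ennreal ((2 ^ Suc k) powr q) * indicator {y \<in> B. infdist y E < R / 2 ^ k} y)"
proof (cases "y \<in> B")
  case True
  have "ennreal (max 1 (R / infdist y E) powr q)
      \<le> 1 + (\<Sum>k. ennreal ((2 ^ Suc k) powr q) * indicator {..< R / 2 ^ k} (infdist y E))"
    by (rule max_ratio_powr_le_dyadic_sum[OF assms(1) infdist_nonneg assms(2)])
  also have "\<dots> = 1 + (\<Sum>k. ennreal ((2 ^ Suc k) powr q) * indicator {y \<in> B. infdist y E < R / 2 ^ k} y)"
    using True by (simp add: indicator_def)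
  finally show ?thesis using True by simp
qed simp

lemma nn_integral_indicator_add_suminf:
  fixes c :: "nat \<Rightarrow> ennreal"
  assumes "B \<in> sets M" "\<And>k. T k \<in> sets M"
  shows "(\<integral>\<^sup>+y. indicator B y + (\<Sum>k. c k * indicator (T k) y) \<partial>M) = emeasure M B + (\<Sum>k. c k * emeasure M (T k))"
proof -
  have meas: "(\<lambda>y. c k * indicator (T k) y) \<in> borel_measurable M" for k
    using assms(2) by (intro borel_measurable_times_ennreal borel_measurable_const borel_measurable_indicator)
  then have "(\<lambda>y. \<Sum>k. c k * indicator (T k) y) \<in> borel_measurable M"
    by (rule borel_measurable_suminf_order)
  then have "(\<integral>\<^sup>+y. indicator B y + (\<Sum>k. c k * indicator (T k) y) \<partial>M)
      = emeasure M B + (\<integral>\<^sup>+y. (\<Sum>k. c k * indicator (T k) y) \<partial>M)"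
    using assms(1) by (subst nn_integral_add) auto
  also have "(\<integral>\<^sup>+y. (\<Sum>k. c k * indicator (T k) y) \<partial>M) = (\<Sum>k. c k * emeasure M (T k))"
    using meas assms(2) by (simp add: nn_integral_suminf nn_integral_cmult_indicator)
  finally show ?thesis .
qed

lemma dyadic_layer_measure:
  fixes E :: "'a::euclidean_space set" and K l q R r :: real
  assumes tube: "\<And>x \<rho> s. 0 < s \<Longrightarrow> s \<le> \<rho> \<Longrightarrow>
       emeasure lborel {y \<in> ball x \<rho>. infdist y E < s} \<le> ennreal (K * \<rho> powr l * s powr (real DIM('a) - l))"
    and R: "0 < R" "R \<le> r"
  shows "ennreal ((2 ^ Suc k) powr q) * emeasure lborel {y \<in> ball x r. infdist y E < R / 2 ^ k}
           \<le> ennreal (2 powr q * K * r powr l * R powr (real DIM('a) - l) * (2 powr (q + l - real DIM('a))) ^ k)"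
proof -
  define d where "d = real DIM('a)"
  have pow: "(2 ^ k) powr a = (2 powr a) ^ k" for a :: real
  proof -
    have "(2::real) ^ k = 2 powr real k" by (simp add: powr_realpow)
    then show ?thesis by (simp add: powr_powr powr_power mult.commute)
  qed
  have "R / 2 ^ k \<le> R" using divide_left_mono[of 1 "2 ^ k" R] R by simp
  then have "ennreal ((2 ^ Suc k) powr q) * emeasure lborel {y \<in> ball x r. infdist y E < R / 2 ^ k}
      \<le> ennreal ((2 ^ Suc k) powr q) * ennreal (K * r powr l * (R / 2 ^ k) powr (d - l))"
    unfolding d_def using R by (intro mult_left_mono tube) auto
  also have "\<dots> = ennreal ((2 ^ Suc k) powr q * (K * r powr l * (R / 2 ^ k) powr (d - l)))"
    by (rule ennreal_mult'[symmetric]) simp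
  also have "(2 ^ Suc k) powr q * (K * r powr l * (R / 2 ^ k) powr (d - l))
      = 2 powr q * K * r powr l * R powr (d - l) * (2 powr (q + l - d)) ^ k"
  proof -
    have w: "(2 ^ Suc k) powr q = 2 powr q * (2 powr q) ^ k" by (simp add: powr_mult pow)
    have Rk: "(R / 2 ^ k) powr (d - l) = R powr (d - l) / (2 powr (d - l)) ^ k"
      by (simp add: powr_divide pow)
    have hk: "(2 powr (q + l - d)) ^ k = (2 powr q) ^ k / (2 powr (d - l)) ^ k"
      by (simp add: powr_diff power_divide power_mult_distrib diff_diff_eq2[symmetric] add.commute)
    show ?thesis unfolding w Rk hk by (simp add: ac_simps)
  qed
  finally show ?thesis unfolding d_def .
qed

lemma suminf_ennreal_geometric:
  fixes a h :: real
  assumes "0 \<le> a" "0 \<le> h" "h < 1"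
  shows "(\<Sum>k. ennreal (a * h ^ k)) = ennreal (a / (1 - h))"
proof -
  have "(\<lambda>k. a * h ^ k) sums (a * (1 / (1 - h)))" using assms by (intro sums_mult geometric_sums) auto
  then show ?thesis using assms by (intro suminf_ennreal_eq) auto
qed

lemma powr_mult_powr_le_power:
  fixes r R l :: real
  assumes "0 < R" "R \<le> r" "l \<le> real n"
  shows "r powr l * R powr (real n - l) \<le> r ^ n"
proof -
  have "r powr l * R powr (real n - l) \<le> r powr l * r powr (real n - l)"
    using assms by (intro mult_left_mono powr_mono2) auto
  also have "\<dots> = r ^ n" using assms by (simp add: powr_add[symmetric] powr_realpow)
  finally show ?thesis .
qed

lemma tube_layer_integral:
  fixes E :: "'a::euclidean_space set" and K l q :: real
  assumes "0 \<le> K" "0 \<le> q" "l + q < DIM('a)"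
    and tube: "\<And>x \<rho> s. 0 < s \<Longrightarrow> s \<le> \<rho> \<Longrightarrow>
       emeasure lborel {y \<in> ball x \<rho>. infdist y E < s} \<le> ennreal (K * \<rho> powr l * s powr (real DIM('a) - l))"
  obtains C where "0 < C"
    "\<And>x r R. 0 < R \<Longrightarrow> R \<le> r \<Longrightarrow>
       (\<integral>\<^sup>+y. indicator (ball x r) y * ennreal (max 1 (R / infdist y E) powr q) \<partial>lborel)
         \<le> ennreal (C * r ^ DIM('a))"
proof
  define d where "d = real DIM('a)"
  define h :: real where "h = 2 powr (q + l - d)"
  have h: "0 < h" "h < 1" using assms(3) unfolding h_def d_def by (auto intro: powr_less_one)
  define \<omega> where "\<omega> = unit_ball_vol d"
  have \<omega>: "0 < \<omega>" unfolding \<omega>_def d_def by simp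
  show "0 < \<omega> + 2 powr q * K / (1 - h)" using \<omega> h assms(1) by (simp add: add_pos_nonneg)
  fix x :: 'a and r R :: real assume R: "0 < R" "R \<le> r"
  define T where "T k = {y \<in> ball x r. infdist y E < R / 2 ^ k}" for k :: nat
  define a where "a = 2 powr q * K * r powr l * R powr (d - l)"
  have [measurable]: "ball x r \<in> sets borel" by simp
  have T_sets: "T k \<in> sets lborel" for k unfolding T_def by measurable
  have "(\<integral>\<^sup>+y. indicator (ball x r) y * ennreal (max 1 (R / infdist y E) powr q) \<partial>lborel)
      \<le> (\<integral>\<^sup>+y. indicator (ball x r) y + (\<Sum>k. ennreal ((2 ^ Suc k) powr q) * indicator (T k) y) \<partial>lborel)"
    unfolding T_def by (intro nn_integral_mono indicator_max_ratio_le_layers R(1) assms(2))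
  also have "\<dots> = emeasure lborel (ball x r) + (\<Sum>k. ennreal ((2 ^ Suc k) powr q) * emeasure lborel (T k))"
    by (rule nn_integral_indicator_add_suminf[OF _ T_sets]) simp
  also have "\<dots> \<le> ennreal (\<omega> * r ^ DIM('a)) + (\<Sum>k. ennreal (a * h ^ k))"
    using R dyadic_layer_measure[OF tube R] unfolding T_def a_def h_def d_def
    by (intro add_mono suminf_le) (auto simp: \<omega>_def d_def emeasure_ball)
  also have "(\<Sum>k. ennreal (a * h ^ k)) = ennreal (a / (1 - h))"
    using h assms(1) R unfolding a_def by (intro suminf_ennreal_geometric) auto
  also have "ennreal (\<omega> * r ^ DIM('a)) + \<dots> \<le> ennreal ((\<omega> + 2 powr q * K / (1 - h)) * r ^ DIM('a))"
  proof -
    have "r powr l * R powr (d - l) \<le> r ^ DIM('a)"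
      using R assms(2,3) unfolding d_def by (intro powr_mult_powr_le_power) auto
    then have "a / (1 - h) \<le> 2 powr q * K / (1 - h) * r ^ DIM('a)"
      using h assms(1) unfolding a_def by (simp add: divide_right_mono mult_left_mono mult.assoc)
    then show ?thesis using h assms(1) \<omega> R
      by (subst ennreal_plus[symmetric]) (auto simp: a_def distrib_right intro!: ennreal_leI)
  qed
  finally show "(\<integral>\<^sup>+y. indicator (ball x r) y * ennreal (max 1 (R / infdist y E) powr q) \<partial>lborel)
      \<le> ennreal ((\<omega> + 2 powr q * K / (1 - h)) * r ^ DIM('a))" .
qed

lemma trunc_infinity [simp]: "trunc t \<infinity> = t"
  by (simp add: trunc_def)

lemma trunc_ereal [simp]: "trunc t (ereal a) = min t a"
  by (simp add: trunc_def min_def)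

lemma trunc_pos: "0 < A \<Longrightarrow> 0 < t \<Longrightarrow> 0 < trunc t A"
  by (cases A) auto

lemma trunc_zero: "0 < A \<Longrightarrow> trunc 0 A = 0"
  by (cases A) auto

lemma trunc_nonneg: "0 < A \<Longrightarrow> 0 \<le> t \<Longrightarrow> 0 \<le> trunc t A"
  by (cases A) auto

lemma trunc_le: "0 < A \<Longrightarrow> trunc t A \<le> t"
  by (cases A) auto

lemma trunc_mono: "0 < A \<Longrightarrow> t \<le> u \<Longrightarrow> trunc t A \<le> trunc u A"
  by (cases A) auto

lemma trunc_min: "0 < A \<Longrightarrow> min t (trunc r A) \<le> trunc t A"
  by (cases A) auto

lemma trunc_scale: "0 < A \<Longrightarrow> 0 \<le> c \<Longrightarrow> c \<le> 1 \<Longrightarrow> c * trunc t A \<le> trunc (c * t) A"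
proof (cases A)
  case (real a)
  assume "0 < A" "0 \<le> c" "c \<le> 1"
  then have "c * a \<le> a" using real by (simp add: mult_left_le_one_le)
  moreover have "c * min t a \<le> c * t" "c * min t a \<le> c * a" using \<open>0 \<le> c\<close> by (auto intro: mult_left_mono)
  ultimately show ?thesis using real by simp
qed auto

lemma bdist_nonneg: "0 \<le> bdist D x"
  by (simp add: bdist_def infdist_nonneg)

definition trunc_ratio :: "'a::euclidean_space set \<Rightarrow> ereal \<Rightarrow> 'a \<Rightarrow> real \<Rightarrow> 'a \<Rightarrow> real" where
  "trunc_ratio D A x r y = max 1 (trunc (max (bdist D x) r) A / trunc (bdist D y) A)"

lemma trunc_ratio_le:
  fixes D :: "'a::euclidean_space set"
  assumes A: "0 < A" and r: "0 < r" and xy: "dist x y < r"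
  shows "trunc_ratio D A x r y \<le> 2 * max 1 (trunc r A / bdist D y)"
proof -
  let ?t = "trunc (max (bdist D x) r) A" and ?u = "trunc (bdist D y) A" and ?R = "trunc r A"
  have t: "0 < ?t" using A r by (intro trunc_pos) auto
  have y: "0 \<le> bdist D y" by (rule bdist_nonneg)
  have lipschitz: "bdist D x \<le> bdist D y + r"
    using infdist_triangle[of x "frontier D" y] xy unfolding bdist_def by simp
  consider (far) "2 * r \<le> bdist D x" | (near) "bdist D x < 2 * r" by linarith
  then have "?t / ?u \<le> 2 * max 1 (?R / bdist D y)"
  proof cases
    case far
    then have "?t / 2 = (1 / 2) * trunc (bdist D x) A" using r by (simp add: max_def)
    also have "\<dots> \<le> trunc ((1 / 2) * bdist D x) A" using A by (intro trunc_scale) auto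
    also have "\<dots> \<le> ?u" using A far lipschitz by (intro trunc_mono) auto
    finally have "?t / ?u \<le> 2" using t by (simp add: divide_le_eq)
    then show ?thesis by linarith
  next
    case near
    have "(1 / 2) * trunc (2 * r) A \<le> ?R" using trunc_scale[OF A, of "1 / 2" "2 * r"] by simp
    moreover have "?t \<le> trunc (2 * r) A" using A near r by (intro trunc_mono) auto
    ultimately have tR: "?t \<le> 2 * ?R" by linarith
    show ?thesis
    proof (cases "bdist D y = 0")
      case False
      then have m: "0 < min (bdist D y) ?R" using y A r by (simp add: trunc_pos)
      have "?t / ?u \<le> 2 * ?R / min (bdist D y) ?R"
        using t tR m trunc_min[OF A, of "bdist D y" r] by (intro frac_le) auto
      also have "\<dots> = 2 * max 1 (?R / bdist D y)"
        using m False y by (auto simp: min_def max_def field_simps)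
      finally show ?thesis .
    qed (simp add: trunc_zero[OF A]) \<comment> \<open>here \<open>?u = 0\<close>, and \<open>?t / 0 = 0\<close> in HOL\<close>
  qed
  then show ?thesis by (simp add: trunc_ratio_def)
qed

lemma inverse_powr_le_max_ratio:
  fixes t u q :: real
  assumes "0 < t" "0 \<le> u" "0 \<le> q"
  shows "1 / u powr q \<le> max 1 (t / u) powr q / t powr q"
proof (cases "u = 0")
  case False
  then have "1 / u powr q = (t / u) powr q / t powr q" using assms by (simp add: powr_divide)
  also have "\<dots> \<le> max 1 (t / u) powr q / t powr q"
    using assms by (intro divide_right_mono powr_mono2) auto
  finally show ?thesis .
qed simp

lemma scaling_le_max_ratio:
  fixes \<Phi> :: "real \<Rightarrow> real"
  assumes mono: "mono_on {0..} \<Phi>" and ge1: "\<And>t. 0 \<le> t \<Longrightarrow> 1 \<le> \<Phi> t"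
    and scal: "\<And>s r. 0 < s \<Longrightarrow> s \<le> r \<Longrightarrow> \<Phi> r / \<Phi> s \<le> C * (r / s) powr \<beta>"
    and "1 \<le> C" "0 \<le> \<beta>" "0 < a" "0 < t" "0 \<le> u"
  shows "\<Phi> (a / u) \<le> C * max 1 (t / u) powr \<beta> * \<Phi> (a / t)"
proof -
  have \<Phi>t: "1 \<le> \<Phi> (a / t)" using assms by (intro ge1) simp
  have "1 \<le> C * max 1 (t / u) powr \<beta>"
    using assms by (metis ge_one_powr_ge_zero max.cobounded1 mult_mono' mult_1_left zero_le_one)
  consider "a / u \<le> a / t" | "a / t < a / u" by linarith
  then show ?thesis
  proof cases
    case 1
    then have "\<Phi> (a / u) \<le> \<Phi> (a / t)" using assms by (intro mono_onD[OF mono]) auto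
    also have "\<dots> \<le> C * max 1 (t / u) powr \<beta> * \<Phi> (a / t)"
      using \<open>1 \<le> C * max 1 (t / u) powr \<beta>\<close> \<Phi>t by (simp add: mult_le_cancel_right1)
    finally show ?thesis .
  next
    case 2
    moreover have "0 < a / t" using assms by simp
    ultimately have u: "0 < u" using assms by (cases "u = 0") auto
    have "\<Phi> (a / u) / \<Phi> (a / t) \<le> C * ((a / u) / (a / t)) powr \<beta>"
      using 2 assms by (intro scal) auto
    also have "(a / u) / (a / t) = t / u" using assms u by simp
    also have "C * (t / u) powr \<beta> \<le> C * max 1 (t / u) powr \<beta>"
      using assms u by (intro mult_left_mono powr_mono2) auto
    finally show ?thesis using \<Phi>t by (simp add: divide_le_eq)
  qed
qed

lemma trunc_ratio_dominated_integral:
  fixes D :: "'a::euclidean_space set" and g :: "'a \<Rightarrow> real" and q C c :: real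
  assumes layer: "\<And>x r R. 0 < R \<Longrightarrow> R \<le> r \<Longrightarrow>
       (\<integral>\<^sup>+y. indicator (ball x r) y * ennreal (max 1 (R / infdist y (frontier D)) powr q) \<partial>lborel)
         \<le> ennreal (C * r ^ DIM('a))"
    and "0 \<le> q" "0 < A" "0 < r" "0 \<le> c"
    and g: "\<And>y. y \<in> ball x r \<inter> D \<Longrightarrow> g y \<le> c * trunc_ratio D A x r y powr q"
  shows "(\<integral>\<^sup>+y. indicator (ball x r \<inter> D) y * ennreal (g y) \<partial>lborel) \<le> ennreal (c * 2 powr q * C * r ^ DIM('a))"
proof -
  let ?R = "trunc r A"
  let ?f = "\<lambda>y. indicator (ball x r) y * ennreal (max 1 (?R / infdist y (frontier D)) powr q)"
  have R: "0 < ?R" "?R \<le> r" using assms by (auto intro: trunc_pos trunc_le)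
  have pointwise: "indicator (ball x r \<inter> D) y * ennreal (g y) \<le> ennreal (c * 2 powr q) * ?f y" for y
  proof (cases "y \<in> ball x r \<inter> D")
    case True
    have "trunc_ratio D A x r y powr q \<le> (2 * max 1 (?R / bdist D y)) powr q"
      using True assms by (intro powr_mono2 trunc_ratio_le) (auto simp: trunc_ratio_def)
    then have "g y \<le> c * (2 powr q * max 1 (?R / bdist D y) powr q)"
      using g[OF True] assms(5) by (simp add: powr_mult order_trans[OF _ mult_left_mono])
    then show ?thesis
      using True assms by (simp add: bdist_def ennreal_mult'[symmetric] ennreal_leI mult.assoc)
  next
    case False
    then have "indicator (ball x r \<inter> D) y = (0::ennreal)" by (rule indicator_simps(2))
    then show ?thesis by simp
  qed
  have [measurable]: "ball x r \<in> sets borel" by simp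
  have "?f \<in> borel_measurable borel" by measurable
  then have "(\<integral>\<^sup>+y. indicator (ball x r \<inter> D) y * ennreal (g y) \<partial>lborel)
      \<le> ennreal (c * 2 powr q) * (\<integral>\<^sup>+y. ?f y \<partial>lborel)"
    by (subst nn_integral_cmult[symmetric]) (auto intro!: nn_integral_mono pointwise)
  also have "\<dots> \<le> ennreal (c * 2 powr q) * ennreal (C * r ^ DIM('a))"
    using R by (intro mult_left_mono layer) auto
  finally show ?thesis using assms(5) by (simp add: ennreal_mult' mult.assoc)
qed

lemma assouad_trunc_ratio_integral:
  fixes D :: "'a::euclidean_space set" and q :: real
  assumes "frontier D \<noteq> {}" "assouad_dim (frontier D) \<noteq> \<infinity>"
    and "0 \<le> q" "q < real DIM('a) - real_of_ereal (assouad_dim (frontier D))"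
  obtains C where "0 < C"
    "\<And>A x r c g. 0 < A \<Longrightarrow> 0 < r \<Longrightarrow> 0 \<le> c \<Longrightarrow>
       (\<And>y. y \<in> ball x r \<inter> D \<Longrightarrow> g y \<le> c * trunc_ratio D A x r y powr q) \<Longrightarrow>
       (\<integral>\<^sup>+y. indicator (ball x r \<inter> D) y * ennreal (g y) \<partial>lborel) \<le> ennreal (c * C * r ^ DIM('a))"
proof -
  have "real_of_ereal (assouad_dim (frontier D)) < real DIM('a) - q" using assms(4) by linarith
  then obtain l where l: "l \<in> assouad_exps (frontier D)" "l < real DIM('a) - q"
    by (rule assouad_exps_less[OF assms(2)])
  have lq: "l + q < DIM('a)" using l(2) by linarith
  obtain K where "0 \<le> K" and tube: "\<And>x \<rho> s. 0 < s \<Longrightarrow> s \<le> \<rho> \<Longrightarrow>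
       emeasure lborel {y \<in> ball x \<rho>. infdist y (frontier D) < s} \<le> ennreal (K * \<rho> powr l * s powr (real DIM('a) - l))"
    by (rule assouad_tube_measure[OF l(1) frontier_closed assms(1)]) (rule that)
  obtain C where "0 < C" and layer: "\<And>x r R. 0 < R \<Longrightarrow> R \<le> r \<Longrightarrow>
       (\<integral>\<^sup>+y. indicator (ball x r) y * ennreal (max 1 (R / infdist y (frontier D)) powr q) \<partial>lborel)
         \<le> ennreal (C * r ^ DIM('a))"
    using tube_layer_integral[OF \<open>0 \<le> K\<close> assms(3) lq tube] by blast
  show ?thesis
  proof (rule that)
    show "0 < 2 powr q * C" using \<open>0 < C\<close> by simp
    fix A x r c and g :: "'a \<Rightarrow> real"
    assume "0 < A" "0 < r" "0 \<le> c" "\<And>y. y \<in> ball x r \<inter> D \<Longrightarrow> g y \<le> c * trunc_ratio D A x r y powr q"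
    then show "(\<integral>\<^sup>+y. indicator (ball x r \<inter> D) y * ennreal (g y) \<partial>lborel) \<le> ennreal (c * (2 powr q * C) * r ^ DIM('a))"
      using trunc_ratio_dominated_integral[OF layer assms(3)] by (simp add: mult.assoc)
  qed
qed

lemma trunc_inverse_powr_integral:
  fixes D :: "'a::euclidean_space set" and q :: real
  assumes "frontier D \<noteq> {}" "assouad_dim (frontier D) \<noteq> \<infinity>"
    and "0 \<le> q" "q < real DIM('a) - real_of_ereal (assouad_dim (frontier D))"
  shows "\<exists>C>0. \<forall>A x r. A > 0 \<and> r > 0 \<longrightarrow>
           (\<integral>\<^sup>+ y. indicator (ball x r \<inter> D) y * ennreal (1 / (trunc (bdist D y) A) powr q) \<partial>lborel)
             \<le> ennreal (C * r ^ DIM('a) / (trunc (max (bdist D x) r) A) powr q)"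
proof -
  obtain C where "0 < C" and weighted: "\<And>A x r c g. 0 < A \<Longrightarrow> 0 < r \<Longrightarrow> 0 \<le> c \<Longrightarrow>
       (\<And>y. y \<in> ball x r \<inter> D \<Longrightarrow> g y \<le> c * trunc_ratio D A x r y powr q) \<Longrightarrow>
       (\<integral>\<^sup>+y. indicator (ball x r \<inter> D) y * ennreal (g y) \<partial>lborel) \<le> ennreal (c * C * r ^ DIM('a))"
    using assouad_trunc_ratio_integral[OF assms] by blast
  have "(\<integral>\<^sup>+ y. indicator (ball x r \<inter> D) y * ennreal (1 / (trunc (bdist D y) A) powr q) \<partial>lborel)
      \<le> ennreal (C * r ^ DIM('a) / (trunc (max (bdist D x) r) A) powr q)" if "0 < A" "0 < r" for A x r
  proof -
    let ?t = "trunc (max (bdist D x) r) A"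
    have t: "0 < ?t" using that by (intro trunc_pos) auto
    have "1 / trunc (bdist D y) A powr q \<le> 1 / ?t powr q * trunc_ratio D A x r y powr q" for y
      using inverse_powr_le_max_ratio[OF t trunc_nonneg[OF that(1) bdist_nonneg] assms(3)]
      by (simp add: trunc_ratio_def)
    then show ?thesis using weighted[OF that, of "1 / ?t powr q"] t by simp
  qed
  then show ?thesis using \<open>0 < C\<close> by blast
qed

lemma trunc_scaling_integral:
  fixes D :: "'a::euclidean_space set" and \<Phi> :: "real \<Rightarrow> real"
  assumes "frontier D \<noteq> {}" "assouad_dim (frontier D) \<noteq> \<infinity>"
    and mono: "mono_on {0..} \<Phi>" and ge1: "\<And>t. 0 \<le> t \<Longrightarrow> 1 \<le> \<Phi> t"
    and \<beta>: "\<beta> \<in> scaling_exps \<Phi>" "\<beta> < real DIM('a) - real_of_ereal (assouad_dim (frontier D))"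
  shows "\<exists>C>0. \<forall>A x a r. A > 0 \<and> a > 0 \<and> r > 0 \<longrightarrow>
           (\<integral>\<^sup>+ y. indicator (ball x r \<inter> D) y * ennreal (\<Phi> (a / trunc (bdist D y) A)) \<partial>lborel)
             \<le> ennreal (C * r ^ DIM('a) * \<Phi> (a / trunc (max (bdist D x) r) A))"
proof -
  obtain C1 where "0 \<le> \<beta>" "1 < C1" and scal: "\<And>s r. 0 < s \<Longrightarrow> s \<le> r \<Longrightarrow> \<Phi> r / \<Phi> s \<le> C1 * (r / s) powr \<beta>"
    using \<beta>(1) unfolding scaling_exps_def by blast
  obtain C where "0 < C" and weighted: "\<And>A x r c g. 0 < A \<Longrightarrow> 0 < r \<Longrightarrow> 0 \<le> c \<Longrightarrow>
       (\<And>y. y \<in> ball x r \<inter> D \<Longrightarrow> g y \<le> c * trunc_ratio D A x r y powr \<beta>) \<Longrightarrow>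
       (\<integral>\<^sup>+y. indicator (ball x r \<inter> D) y * ennreal (g y) \<partial>lborel) \<le> ennreal (c * C * r ^ DIM('a))"
    using assouad_trunc_ratio_integral[OF assms(1,2) \<open>0 \<le> \<beta>\<close> \<beta>(2)] by blast
  have "(\<integral>\<^sup>+ y. indicator (ball x r \<inter> D) y * ennreal (\<Phi> (a / trunc (bdist D y) A)) \<partial>lborel)
      \<le> ennreal (C1 * C * r ^ DIM('a) * \<Phi> (a / trunc (max (bdist D x) r) A))"
    if "0 < A" "0 < a" "0 < r" for A x a r
  proof -
    let ?t = "trunc (max (bdist D x) r) A"
    have t: "0 < ?t" using that by (intro trunc_pos) auto
    have pointwise: "\<Phi> (a / trunc (bdist D y) A) \<le> C1 * \<Phi> (a / ?t) * trunc_ratio D A x r y powr \<beta>" for y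
      using scaling_le_max_ratio[OF mono ge1 scal _ \<open>0 \<le> \<beta>\<close> that(2) t trunc_nonneg[OF that(1) bdist_nonneg]]
        \<open>1 < C1\<close> by (simp add: trunc_ratio_def mult_ac)
    have "0 \<le> C1 * \<Phi> (a / ?t)" using \<open>1 < C1\<close> ge1[of "a / ?t"] that t by simp
    from weighted[OF that(1,3) this pointwise] show ?thesis by (simp add: mult_ac)
  qed
  then show ?thesis using \<open>0 < C\<close> \<open>1 < C1\<close> by (intro exI[of _ "C1 * C"]) auto
qed

theorem lemma2p7:
  fixes D :: "'a::euclidean_space set" and \<kappa> R0 \<alpha> :: real and \<Phi> :: "real \<Rightarrow> real"
  assumes alpha: "0 < \<alpha>" "\<alpha> < 2"
    and fat: "kappa_fat \<kappa> R0 D"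
    and bdry: "frontier D \<noteq> {}"
    and assouad: "assouad_dim (frontier D) < ereal (real DIM('a))"
    and Phi_cont: "continuous_on {0..} \<Phi>"
    and Phi_mono: "mono_on {0..} \<Phi>"
    and Phi_ge1: "\<And>t. t \<ge> 0 \<Longrightarrow> \<Phi> t \<ge> 1"
    and Phi0: "\<Phi> 0 = 1"
    and Phi_scal: "scaling_exps \<Phi> \<noteq> {}"
    and beta_bar: "Inf (scaling_exps \<Phi>)
                     < min (real DIM('a) - real_of_ereal (assouad_dim (frontier D))) \<alpha>"
  shows "(\<forall>q. 0 \<le> q \<and> q < real DIM('a) - real_of_ereal (assouad_dim (frontier D)) \<longrightarrow>
           (\<exists>C>0. \<forall>A x r. A > 0 \<and> x \<in> closure D \<and> r > 0 \<longrightarrow>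
              (\<integral>\<^sup>+ y. indicator (ball x r \<inter> D) y
                   * ennreal (1 / (trunc (bdist D y) A) powr q) \<partial>lborel)
              \<le> ennreal (C * r ^ DIM('a) / (trunc (max (bdist D x) r) A) powr q)))
       \<and> (\<exists>C>0. \<forall>A x a r. A > 0 \<and> x \<in> closure D \<and> a > 0 \<and> r > 0 \<longrightarrow>
              (\<integral>\<^sup>+ y. indicator (ball x r \<inter> D) y
                   * ennreal (\<Phi> (a / trunc (bdist D y) A)) \<partial>lborel)
              \<le> ennreal (C * r ^ DIM('a) * \<Phi> (a / trunc (max (bdist D x) r) A)))"
proof -
  have fin: "assouad_dim (frontier D) \<noteq> \<infinity>" using assouad by auto
  have "Inf (scaling_exps \<Phi>) < real DIM('a) - real_of_ereal (assouad_dim (frontier D))"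
    using beta_bar by simp
  from cInf_lessD[OF Phi_scal this] obtain \<beta>
    where \<beta>: "\<beta> \<in> scaling_exps \<Phi>" "\<beta> < real DIM('a) - real_of_ereal (assouad_dim (frontier D))" ..
  show ?thesis
    using trunc_inverse_powr_integral[OF bdry fin] trunc_scaling_integral[OF bdry fin Phi_mono Phi_ge1 \<beta>]
    by meson
qed

end
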